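(* Let $X_n$ be the number of head abstractions of a uniformly random plain $\lambda$-term of size $n$. Then $X_n$ converges in law to a geometric distribution with parameter $\rho$: for every $h\ge0$, $\mathbb P(X_n=h)\to(1-\rho)\rho^h$ as $n\to\infty$. In particular $\mathbb E X_n\to \rho/(1-\rho)\approx 0.4196$.
   Context: Plain $\lambda$-terms in de Bruijn notation are generated by $T::=\underline{n}\mid \lambda T\mid (T\,T)$, with index $\underline n$ encoded as $\mathsf S^n\mathsf 0$. Size: $|\mathsf 0|=1$, $|\mathsf S\,\underline n|=|\underline n|+1$, $|M\,N|=|M|+|N|+1$, $|\lambda M|=|M|+1$. Every term can be written uniquely as $\lambda^h M$ with $M$ not an abstraction; $h$ is its number of head abstractions. $\rho\approx 0.29559774$ is the positive real root of $z^3+z^2+3z-1$ (the radius of convergence of the generating function of plain terms). *)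

theory Defs
  imports Complex_Main
begin

text \<open>Plain lambda-terms in de Bruijn notation; the index n stands for S^n 0.\<close>
datatype lterm = Var nat | Lam lterm | App lterm lterm

text \<open>Size: |0| = 1, |S n| = |n| + 1 (so |Var n| = n + 1), |M N| = |M|+|N|+1, |\<lambda>M| = |M|+1.\<close>
fun tsize :: "lterm \<Rightarrow> nat" where
  "tsize (Var n) = Suc n"
| "tsize (Lam M) = Suc (tsize M)"
| "tsize (App M N) = Suc (tsize M + tsize N)"

fun heads :: "lterm \<Rightarrow> nat" where
  "heads (Lam M) = Suc (heads M)"
| "heads (Var n) = 0"
| "heads (App M N) = 0"

definition terms_of_size :: "nat \<Rightarrow> lterm set" where
  "terms_of_size n = {t. tsize t = n}"

definition prob_heads :: "nat \<Rightarrow> nat \<Rightarrow> real" where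
  "prob_heads n h = real (card {t \<in> terms_of_size n. heads t = h}) / real (card (terms_of_size n))"

definition exp_heads :: "nat \<Rightarrow> real" where
  "exp_heads n = (\<Sum>t\<in>terms_of_size n. real (heads t)) / real (card (terms_of_size n))"

definition rho :: real where
  "rho = (THE z. z > 0 \<and> z^3 + z^2 + 3*z - 1 = 0)"

end

theory Submission
  imports Defs "HOL-Complex_Analysis.Complex_Analysis" "HOL-Real_Asymp.Real_Asymp"
begin

text \<open>
  Let \<open>T\<^sub>n\<close> be the number of terms of size \<open>n\<close>. The terms of size \<open>n\<close> with at least \<open>h\<close>
  head abstractions are exactly the \<open>\<lambda>\<^sup>h M\<close> with \<open>|M| = n - h\<close>, so
  \<open>P(X\<^sub>n \<ge> h) = T\<^sub>n\<^sub>-\<^sub>h / T\<^sub>n\<close>, and both claims follow once \<open>T\<^sub>n / T\<^sub>n\<^sub>+\<^sub>1 \<rightarrow> \<rho>\<close>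
  (the expectation by dominated convergence, \<open>T\<^sub>n\<close> growing geometrically).

  The generating function satisfies \<open>T = z/(1-z) + zT + zT\<^sup>2\<close>, so \<open>Y = 1 - z - 2zT\<close> satisfies
  \<open>(1 - z) Y\<^sup>2 = 1 - 3z - z\<^sup>2 - z\<^sup>3 = (1 - z/\<rho>) q(z)\<close> with \<open>q\<close> zero-free on \<open>|z| < 2/5\<close>.
  Hence \<open>Y = \<surd>(1 - z/\<rho>) G(z)\<close> with \<open>G\<close> analytic beyond \<open>\<rho>\<close>, and Darboux's method gives
  \<open>[z\<^sup>n] Y \<sim> G(\<rho>) [z\<^sup>n] \<surd>(1 - z/\<rho>)\<close>, whose consecutive ratios tend to \<open>\<rho>\<close>.
\<close>

lemma rho:
  shows rho_root: "rho^3 + rho^2 + 3*rho = 1"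
    and rho_gt: "29/100 < rho"
    and rho_lt: "rho < 3/10"
proof -
  define p :: "real \<Rightarrow> real" where "p z = z^3 + z^2 + 3*z - 1" for z
  have p_strict_mono: "p x < p y" if "0 \<le> x" "x < y" for x y
  proof -
    have "x^3 \<le> y^3" "x^2 \<le> y^2" using that by (simp_all add: power_mono)
    thus ?thesis using \<open>x < y\<close> by (simp add: p_def)
  qed
  have "\<exists>z\<ge>29/100. z \<le> 3/10 \<and> p z = 0"
    by (rule IVT) (auto simp: p_def power3_eq_cube power2_eq_square intro!: continuous_intros)
  then obtain z where z: "29/100 \<le> z" "z \<le> 3/10" "p z = 0" by auto
  have "p (29/100) \<noteq> 0" "p (3/10) \<noteq> 0"
    by (simp_all add: p_def power3_eq_cube power2_eq_square)
  with z(3) have "z \<noteq> 29/100" "z \<noteq> 3/10" by metis+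
  with z(1,2) have z_bounds: "29/100 < z" "z < 3/10" by auto
  have "w = z" if "w > 0" "p w = 0" for w
    using p_strict_mono[of w z] p_strict_mono[of z w] that z z_bounds by (cases w z rule: linorder_cases) auto
  hence "rho = z"
    unfolding rho_def using z z_bounds by (intro the_equality) (auto simp: p_def)
  thus "rho^3 + rho^2 + 3*rho = 1" "29/100 < rho" "rho < 3/10"
    using z z_bounds by (auto simp: p_def)
qed

lemma rho_pos: "0 < rho"
  using rho_gt by simp

section \<open>Counting terms\<close>

definition num_terms :: "nat \<Rightarrow> nat" where
  "num_terms n = card (terms_of_size n)"

lemma tsize_pos: "0 < tsize t"
  by (cases t) auto

lemma terms_of_size_0: "terms_of_size 0 = {}"
  using tsize_pos by (auto simp: terms_of_size_def)

lemma terms_of_size_Suc: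
  "terms_of_size (Suc n) = insert (Var n) (Lam ` terms_of_size n \<union>
     (\<Union>i\<le>n. case_prod App ` (terms_of_size i \<times> terms_of_size (n - i))))"
  (is "?L = ?R")
proof
  show "?L \<subseteq> ?R"
  proof
    fix t assume "t \<in> ?L"
    hence size: "tsize t = Suc n" by (simp add: terms_of_size_def)
    show "t \<in> ?R"
    proof (cases t)
      case (App a b)
      with size have "tsize a \<le> n" "tsize b = n - tsize a" by auto
      thus ?thesis using App by (auto simp: terms_of_size_def image_iff)
    qed (use size in \<open>auto simp: terms_of_size_def\<close>)
  qed
qed (auto simp: terms_of_size_def)

lemma finite_terms_of_size: "finite (terms_of_size n)"
proof (induction n rule: less_induct)
  case (less n)
  show ?case
  proof (cases n)
    case (Suc m)
    have "finite (terms_of_size i)" if "i \<le> m" for i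
      using less Suc that by simp
    moreover have "finite (terms_of_size (m - i))" for i
      using less Suc by simp
    ultimately show ?thesis unfolding Suc terms_of_size_Suc by auto
  qed (simp add: terms_of_size_0)
qed

lemma num_terms_0: "num_terms 0 = 0"
  by (simp add: num_terms_def terms_of_size_0)

lemma num_terms_Suc:
  "num_terms (Suc n) = Suc (num_terms n + (\<Sum>i\<le>n. num_terms i * num_terms (n - i)))"
proof -
  let ?App = "\<lambda>i. case_prod App ` (terms_of_size i \<times> terms_of_size (n - i))"
  have card_App: "card (?App i) = num_terms i * num_terms (n - i)" for i
    by (subst card_image) (auto simp: inj_on_def card_cartesian_product num_terms_def)
  have card_Apps: "card (\<Union>i\<le>n. ?App i) = (\<Sum>i\<le>n. num_terms i * num_terms (n - i))"
  proof (subst card_UN_disjoint)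
    show "\<forall>i\<in>{..n}. \<forall>j\<in>{..n}. i \<noteq> j \<longrightarrow> ?App i \<inter> ?App j = {}"
      by (auto simp: terms_of_size_def)
  qed (auto simp: finite_terms_of_size card_App)
  have "card (Lam ` terms_of_size n) = num_terms n"
    by (simp add: card_image inj_on_def num_terms_def)
  with card_Apps have "card (Lam ` terms_of_size n \<union> (\<Union>i\<le>n. ?App i))
      = num_terms n + (\<Sum>i\<le>n. num_terms i * num_terms (n - i))"
    by (subst card_Un_disjoint) (auto simp: finite_terms_of_size)
  thus ?thesis unfolding num_terms_def terms_of_size_Suc
    by (subst card_insert_disjoint) (auto simp: finite_terms_of_size)
qed

lemma num_terms_pos: "0 < n \<Longrightarrow> 0 < num_terms n"
  by (cases n) (auto simp: num_terms_Suc)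

lemma mono_num_terms: "mono num_terms"
  unfolding mono_iff_le_Suc by (simp add: num_terms_Suc)

section \<open>Head abstractions\<close>

lemma tsize_Lam_power [simp]: "tsize ((Lam ^^ h) t) = tsize t + h"
  by (induction h) auto

lemma heads_Lam_power [simp]: "heads ((Lam ^^ h) t) = heads t + h"
  by (induction h) auto

lemma inj_Lam_power: "inj (Lam ^^ h)"
  by (induction h) (auto simp: inj_def)

lemma Lam_power_strip: "h \<le> heads t \<Longrightarrow> \<exists>s. t = (Lam ^^ h) s"
proof (induction h arbitrary: t)
  case (Suc h)
  then obtain t' where t: "t = Lam t'" "h \<le> heads t'"
    by (cases t) auto
  from Suc.IH[OF t(2)] obtain s where "t' = (Lam ^^ h) s" ..
  with t show ?case
    by auto
qed simp

lemma heads_less_tsize: "heads t < tsize t"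
  by (induction t) auto

lemma card_heads_ge:
  assumes "h \<le> n"
  shows "card {t \<in> terms_of_size n. h \<le> heads t} = num_terms (n - h)"
proof -
  have "{t \<in> terms_of_size n. h \<le> heads t} = (Lam ^^ h) ` terms_of_size (n - h)"
    using assms by (auto simp: terms_of_size_def dest!: Lam_power_strip)
  thus ?thesis
    by (simp add: card_image inj_on_subset[OF inj_Lam_power] num_terms_def)
qed

lemma prob_heads_eq:
  assumes "h < n"
  shows "prob_heads n h
    = real (num_terms (n - h)) / num_terms n - real (num_terms (n - Suc h)) / num_terms n"
proof -
  have "{t \<in> terms_of_size n. heads t = h}
      = {t \<in> terms_of_size n. h \<le> heads t} - {t \<in> terms_of_size n. Suc h \<le> heads t}"
    by auto
  hence "card {t \<in> terms_of_size n. heads t = h}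
      = card {t \<in> terms_of_size n. h \<le> heads t} - card {t \<in> terms_of_size n. Suc h \<le> heads t}"
    by (simp add: card_Diff_subset finite_terms_of_size subset_iff)
  hence "card {t \<in> terms_of_size n. heads t = h} = num_terms (n - h) - num_terms (n - Suc h)"
    using assms by (simp add: card_heads_ge)
  moreover have "num_terms (n - Suc h) \<le> num_terms (n - h)"
    by (intro monoD[OF mono_num_terms]) auto
  ultimately show ?thesis
    by (simp add: prob_heads_def num_terms_def of_nat_diff diff_divide_distrib)
qed

lemma exp_heads_eq: "exp_heads n = (\<Sum>h<n. real (num_terms (n - Suc h))) / num_terms n"
proof -
  have "(\<Sum>t\<in>terms_of_size n. real (heads t))
      = (\<Sum>t\<in>terms_of_size n. \<Sum>h<n. of_bool (Suc h \<le> heads t))"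
  proof (rule sum.cong)
    fix t assume "t \<in> terms_of_size n"
    hence "{..<n} \<inter> {h. Suc h \<le> heads t} = {..<heads t}"
      using heads_less_tsize[of t] by (auto simp: terms_of_size_def)
    thus "real (heads t) = (\<Sum>h<n. of_bool (Suc h \<le> heads t))"
      by simp
  qed simp
  also have "\<dots> = (\<Sum>h<n. \<Sum>t\<in>terms_of_size n. of_bool (Suc h \<le> heads t))"
    by (rule sum.swap)
  also have "\<dots> = (\<Sum>h<n. real (num_terms (n - Suc h)))"
  proof (rule sum.cong)
    fix h assume "h \<in> {..<n}"
    hence "card {t \<in> terms_of_size n. Suc h \<le> heads t} = num_terms (n - Suc h)"
      by (intro card_heads_ge) auto
    thus "(\<Sum>t\<in>terms_of_size n. of_bool (Suc h \<le> heads t)) = real (num_terms (n - Suc h))"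
      using finite_terms_of_size[of n] by (simp add: Int_def)
  qed simp
  finally show ?thesis
    by (simp add: exp_heads_def num_terms_def)
qed

section \<open>Sequences with a limiting ratio\<close>

lemma ratio_shift_tendsto:
  fixes a :: "nat \<Rightarrow> real"
  assumes ratio: "(\<lambda>n. a n / a (Suc n)) \<longlonglongrightarrow> r" and nz: "eventually (\<lambda>n. a n \<noteq> 0) sequentially"
  shows "(\<lambda>n. a n / a (n + h)) \<longlonglongrightarrow> r ^ h"
proof (induction h)
  case 0
  have "eventually (\<lambda>n. a n / a (n + 0) = 1) sequentially"
    using nz by eventually_elim simp
  thus ?case
    by (simp add: tendsto_eventually)
next
  case (Suc h)
  have "(\<lambda>n. a n / a (n + h) * (a (n + h) / a (Suc (n + h)))) \<longlonglongrightarrow> r ^ h * r"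
    using Suc.IH LIMSEQ_ignore_initial_segment[OF ratio, of h]
    by (intro tendsto_mult) (simp_all add: add.commute)
  moreover have "eventually (\<lambda>n. a n / a (n + h) * (a (n + h) / a (Suc (n + h)))
      = a n / a (n + Suc h)) sequentially"
    using eventually_ge_at_top[of h] sequentially_offset[OF nz, of h]
    by eventually_elim simp
  ultimately show ?case
    by (simp add: Lim_transform_eventually mult.commute)
qed

lemma ratio_back_tendsto:
  fixes a :: "nat \<Rightarrow> real"
  assumes "(\<lambda>n. a n / a (Suc n)) \<longlonglongrightarrow> r" "eventually (\<lambda>n. a n \<noteq> 0) sequentially"
  shows "(\<lambda>n. a (n - h) / a n) \<longlonglongrightarrow> r ^ h"
  by (rule LIMSEQ_offset[of _ h]) (simp add: ratio_shift_tendsto[OF assms])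

lemma ratio_geometric_domination:
  fixes a :: "nat \<Rightarrow> real"
  assumes mono: "mono a" and nonneg: "\<And>n. 0 \<le> a n"
    and ratio: "(\<lambda>n. a n / a (Suc n)) \<longlonglongrightarrow> r" and q: "r < q" "0 < q" "q \<le> 1"
  shows "\<exists>C>0. \<forall>j n. j \<le> n \<longrightarrow> a j \<le> C * q ^ (n - j) * a n"
proof -
  obtain N where N: "\<And>n. n \<ge> N \<Longrightarrow> a n / a (Suc n) < q"
    using order_tendstoD(2)[OF ratio q(1)] unfolding eventually_sequentially by blast
  have ratio_step: "a n \<le> q * a (Suc n)" if "n \<ge> N" for n
  proof (cases "a (Suc n) = 0")
    case True
    thus ?thesis using monoD[OF mono, of n "Suc n"] nonneg[of n] by simp
  next
    case False
    thus ?thesis using N[OF that] nonneg[of "Suc n"] by (simp add: field_simps)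
  qed
  have tail: "a j \<le> q ^ (n - j) * a n" if "N \<le> j" "j \<le> n" for j n
    using that(2)
  proof (induction n rule: dec_induct)
    case (step n)
    have "a j \<le> q ^ (n - j) * a n" by fact
    also have "\<dots> \<le> q ^ (n - j) * (q * a (Suc n))"
      using step.hyps that(1) q by (intro mult_left_mono ratio_step) auto
    also have "\<dots> = q ^ (Suc n - j) * a (Suc n)"
      using step.hyps by (simp add: Suc_diff_le)
    finally show ?case .
  qed simp
  have "a j \<le> (1 / q ^ N) * q ^ (n - j) * a n" if "j \<le> n" for j n
  proof -
    have "a j \<le> q ^ (n - max j N) * a n"
    proof (cases "N \<le> n")
      case True
      have "a j \<le> a (max j N)" by (intro monoD[OF mono]) simp
      also have "\<dots> \<le> q ^ (n - max j N) * a n" using tail[of "max j N" n] True that by simp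
      finally show ?thesis .
    qed (use monoD[OF mono that] in simp)
    also have "q ^ (n - max j N) \<le> (1 / q ^ N) * q ^ (n - j)"
    proof -
      have "q ^ (n - max j N) \<le> q ^ (n - j - N)"
        using q by (intro power_decreasing) auto
      also have "\<dots> = (1 / q ^ N) * q ^ (n - j - N + N)"
        using q by (simp add: power_add)
      also have "\<dots> \<le> (1 / q ^ N) * q ^ (n - j)"
        using q by (intro mult_left_mono power_decreasing) auto
      finally show ?thesis .
    qed
    hence "q ^ (n - max j N) * a n \<le> (1 / q ^ N) * q ^ (n - j) * a n"
      using nonneg by (intro mult_right_mono) auto
    finally show ?thesis .
  qed
  moreover have "1 / q ^ N > 0" using q by simp
  ultimately show ?thesis by blast
qed

text \<open>Tannery's theorem, with the majorant supplied by geometric domination.\<close>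

lemma ratio_tail_sum_tendsto:
  fixes a :: "nat \<Rightarrow> real"
  assumes mono: "mono a" and nonneg: "\<And>n. 0 \<le> a n" and pos: "eventually (\<lambda>n. 0 < a n) sequentially"
    and ratio: "(\<lambda>n. a n / a (Suc n)) \<longlonglongrightarrow> r" and "r < 1"
  shows "(\<lambda>n. (\<Sum>h<n. a (n - Suc h)) / a n) \<longlonglongrightarrow> r / (1 - r)"
proof -
  have "0 \<le> r"
    using nonneg by (intro LIMSEQ_le_const[OF ratio]) auto
  define q where "q = (1 + r) / 2"
  have q: "r < q" "0 < q" "q < 1"
    using \<open>0 \<le> r\<close> \<open>r < 1\<close> by (auto simp: q_def)
  then obtain C where "C > 0" and C: "\<And>j n. j \<le> n \<Longrightarrow> a j \<le> C * q ^ (n - j) * a n"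
    using ratio_geometric_domination[OF mono nonneg ratio q(1,2) less_imp_le[OF q(3)]] by blast
  define A where "A h n = (if h < n then a (n - Suc h) / a n else 0)" for h n
  have "(\<lambda>n. a (n - Suc h) / a n) \<longlonglongrightarrow> r ^ Suc h" for h
    using pos by (intro ratio_back_tendsto[OF ratio]) (auto elim: eventually_mono)
  hence lim: "(\<lambda>n. A h n) \<longlonglongrightarrow> r ^ Suc h" for h
    by (rule Lim_transform_eventually)
       (use eventually_gt_at_top[of h] in \<open>eventually_elim, simp add: A_def\<close>)
  have "norm (A h n) \<le> C * q ^ Suc h" for h n
  proof (cases "h < n")
    case True
    have "a (n - Suc h) \<le> C * q ^ Suc h * a n"
      using C[of "n - Suc h" n] True by simp
    moreover have "0 \<le> a (n - Suc h)" "0 \<le> a n" by (fact nonneg)+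
    ultimately show ?thesis
      using True \<open>C > 0\<close> q by (auto simp: A_def divide_le_eq)
  qed (use \<open>C > 0\<close> q in \<open>simp add: A_def\<close>)
  hence bound: "eventually (\<lambda>(h, n). norm (A h n) \<le> C * q ^ Suc h) (at_top \<times>\<^sub>F sequentially)"
    by (simp add: always_eventually)
  have "summable (\<lambda>h. C * q ^ Suc h)"
    using q by (intro summable_mult) simp
  from tannerys_theorem[OF lim bound this sequentially_bot]
  have "(\<lambda>n. \<Sum>h. A h n) \<longlonglongrightarrow> (\<Sum>h. r ^ Suc h)"
    by blast
  moreover have "(\<Sum>h. A h n) = (\<Sum>h<n. a (n - Suc h)) / a n" for n
  proof -
    have "(\<Sum>h. A h n) = (\<Sum>h<n. A h n)"
      by (rule suminf_finite) (auto simp: A_def)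
    thus ?thesis
      by (simp add: A_def sum_divide_distrib)
  qed
  moreover have "(\<Sum>h. r ^ Suc h) = r / (1 - r)"
    using suminf_geometric[of r] summable_geometric[of r] \<open>0 \<le> r\<close> \<open>r < 1\<close>
    by (simp add: suminf_mult)
  ultimately show ?thesis by simp
qed

lemma ratio_tendsto_of_scaled_tendsto:
  fixes y :: "nat \<Rightarrow> complex" and c :: "nat \<Rightarrow> real"
  assumes lim: "(\<lambda>n. y n * of_real r ^ n / of_real (c n)) \<longlonglongrightarrow> L" and "L \<noteq> 0"
    and c: "(\<lambda>n. c n / c (Suc n)) \<longlonglongrightarrow> 1" "\<And>n. c n \<noteq> 0" and "r \<noteq> 0"
  shows "(\<lambda>n. y n / y (Suc n)) \<longlonglongrightarrow> of_real r"
proof -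
  define D where "D n = y n * of_real r ^ n / of_real (c n)" for n
  have "(\<lambda>n. D n / D (Suc n) * of_real (c n / c (Suc n)) * of_real r) \<longlonglongrightarrow> L / L * of_real 1 * of_real r"
    unfolding D_def using \<open>L \<noteq> 0\<close>
    by (intro tendsto_intros lim c(1) LIMSEQ_Suc[OF lim])
  moreover have "D n / D (Suc n) * of_real (c n / c (Suc n)) * of_real r = y n / y (Suc n)" for n
    using c(2)[of n] c(2)[of "Suc n"] \<open>r \<noteq> 0\<close> by (simp add: D_def field_simps)
  ultimately show ?thesis
    using \<open>L \<noteq> 0\<close> by simp
qed

section \<open>Coefficients of \<open>\<surd>(1 - z)\<close>\<close>

definition sqrt_coeff :: "nat \<Rightarrow> real" where
  "sqrt_coeff j = pochhammer (-1/2) j / fact j"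

lemma sqrt_coeff_0 [simp]: "sqrt_coeff 0 = 1"
  by (simp add: sqrt_coeff_def)

lemma sqrt_coeff_Suc: "sqrt_coeff (Suc j) = sqrt_coeff j * ((real j - 1/2) / (real j + 1))"
  by (simp add: sqrt_coeff_def pochhammer_Suc field_simps)

lemma sqrt_coeff_nonzero: "sqrt_coeff j \<noteq> 0"
proof -
  have "(-1/2 :: real) \<noteq> - of_nat k" for k
    by (cases k) auto
  thus ?thesis by (simp add: sqrt_coeff_def pochhammer_eq_0_iff)
qed

lemma sqrt_coeff_square_mono:
  assumes "1 \<le> n" "n \<le> m"
  shows "\<bar>sqrt_coeff n\<bar> * real n ^ 2 \<le> \<bar>sqrt_coeff m\<bar> * real m ^ 2"
  using assms(2)
proof (induction m rule: dec_induct)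
  case (step m)
  have m: "1 \<le> real m" using step.hyps assms(1) by simp
  have "real m ^ 2 \<le> (real m - 1/2) * (real m + 1)"
    using m by (simp add: power2_eq_square algebra_simps)
  also have "\<dots> = (real m - 1/2) / (real m + 1) * real (Suc m) ^ 2"
    by (simp add: power2_eq_square field_simps)
  finally have "\<bar>sqrt_coeff m\<bar> * real m ^ 2
      \<le> \<bar>sqrt_coeff m\<bar> * ((real m - 1/2) / (real m + 1) * real (Suc m) ^ 2)"
    by (rule mult_left_mono) simp
  also have "\<dots> = \<bar>sqrt_coeff (Suc m)\<bar> * real (Suc m) ^ 2"
    using m by (simp add: sqrt_coeff_Suc abs_mult)
  finally have "\<bar>sqrt_coeff m\<bar> * real m ^ 2 \<le> \<bar>sqrt_coeff (Suc m)\<bar> * real (Suc m) ^ 2" .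
  with step.IH show ?case by linarith
qed simp

lemma sqrt_coeff_ratio_bound:
  assumes "k \<le> m"
  shows "\<bar>sqrt_coeff (m - k)\<bar> \<le> 2 * (real k + 1) ^ 2 * \<bar>sqrt_coeff m\<bar>"
proof (cases "k = m")
  case True
  show ?thesis
  proof (cases "m = 0")
    case False
    have "1/2 \<le> \<bar>sqrt_coeff m\<bar> * real m ^ 2"
      using sqrt_coeff_square_mono[of 1 m] sqrt_coeff_Suc[of 0] False by simp
    also have "\<dots> \<le> \<bar>sqrt_coeff m\<bar> * (real k + 1) ^ 2"
      using True by (intro mult_left_mono power_mono) auto
    finally show ?thesis using True by (simp add: mult_ac)
  qed (use True in simp)
next
  case False
  define n where "n = m - k"
  have n1: "1 \<le> n"
    using False assms by (simp add: n_def)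
  have "real k * 1 \<le> real k * real n"
    using n1 by (intro mult_left_mono) auto
  with assms have n2: "real m \<le> (real k + 1) * real n"
    by (simp add: n_def of_nat_diff algebra_simps)
  note n = n1 n2
  have "\<bar>sqrt_coeff n\<bar> * real n ^ 2 \<le> \<bar>sqrt_coeff m\<bar> * real m ^ 2"
    using sqrt_coeff_square_mono[OF n(1)] assms by (simp add: n_def)
  also have "\<dots> \<le> \<bar>sqrt_coeff m\<bar> * ((real k + 1) ^ 2 * real n ^ 2)"
    using n(2) by (intro mult_left_mono) (auto simp flip: power_mult_distrib intro: power_mono)
  finally have "\<bar>sqrt_coeff n\<bar> * real n ^ 2 \<le> ((real k + 1) ^ 2 * \<bar>sqrt_coeff m\<bar>) * real n ^ 2"
    by (simp only: mult_ac)
  hence "\<bar>sqrt_coeff n\<bar> \<le> (real k + 1) ^ 2 * \<bar>sqrt_coeff m\<bar>"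
    by (rule mult_right_le_imp_le) (use n(1) in simp)
  moreover have "0 \<le> (real k + 1) ^ 2 * \<bar>sqrt_coeff m\<bar>"
    by simp
  ultimately show ?thesis
    unfolding n_def by linarith
qed

lemma sqrt_coeff_ratio_tendsto: "(\<lambda>j. sqrt_coeff j / sqrt_coeff (Suc j)) \<longlonglongrightarrow> 1"
proof -
  have "(\<lambda>j. (real j - 1/2) / (real j + 1)) \<longlonglongrightarrow> 1"
    by real_asymp
  hence "(\<lambda>j. inverse (sqrt_coeff (Suc j) / sqrt_coeff j)) \<longlonglongrightarrow> inverse 1"
    by (intro tendsto_inverse) (simp_all add: sqrt_coeff_Suc sqrt_coeff_nonzero)
  thus ?thesis
    by simp
qed

lemma sqrt_coeff_back_tendsto: "(\<lambda>m. sqrt_coeff (m - k) / sqrt_coeff m) \<longlonglongrightarrow> 1"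
  using ratio_back_tendsto[OF sqrt_coeff_ratio_tendsto, of k] sqrt_coeff_nonzero by simp

lemma summable_square_times_geometric:
  fixes \<theta> :: real
  assumes "0 < \<theta>" "\<theta> < 1"
  shows "summable (\<lambda>k. (real k + 1) ^ 2 * \<theta> ^ k)"
proof (rule ratio_test_convergence)
  have "(\<lambda>k. ((real k + 1) / (real k + 2)) ^ 2 / \<theta>) \<longlonglongrightarrow> 1 ^ 2 / \<theta>"
    using assms by (intro tendsto_intros) (real_asymp, simp)
  moreover have "((real k + 1) / (real k + 2)) ^ 2 / \<theta>
      = (real k + 1) ^ 2 * \<theta> ^ k / ((real (Suc k) + 1) ^ 2 * \<theta> ^ Suc k)" for k
  proof -
    have "real (Suc k) + 1 = real k + 2" by simp
    thus ?thesis using assms by (simp add: power_divide)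
  qed
  ultimately have "(\<lambda>k. (real k + 1) ^ 2 * \<theta> ^ k / ((real (Suc k) + 1) ^ 2 * \<theta> ^ Suc k))
      \<longlonglongrightarrow> 1 / \<theta>"
    by simp
  hence "liminf (\<lambda>k. ereal ((real k + 1) ^ 2 * \<theta> ^ k / ((real (Suc k) + 1) ^ 2 * \<theta> ^ Suc k)))
      = ereal (1 / \<theta>)"
    by (intro lim_imp_Liminf) (auto intro: tendsto_ereal)
  with assms show "liminf (\<lambda>k. ereal ((real k + 1) ^ 2 * \<theta> ^ k / ((real (Suc k) + 1) ^ 2 * \<theta> ^ Suc k))) > 1"
    by simp
qed (use assms in simp)

text \<open>Darboux's transfer principle for a regularly varying factor, proved by Tannery's theorem.\<close>

lemma convolution_transfer:
  fixes c :: "nat \<Rightarrow> real" and a :: "nat \<Rightarrow> complex"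
  assumes nz: "\<And>m. c m \<noteq> 0"
    and lim: "\<And>k. (\<lambda>m. c (m - k) / c m) \<longlonglongrightarrow> 1"
    and bound: "\<And>k m. k \<le> m \<Longrightarrow> \<bar>c (m - k)\<bar> \<le> B k * \<bar>c m\<bar>"
    and summable: "summable (\<lambda>k. B k * norm (a k))"
  shows "(\<lambda>m. (\<Sum>k\<le>m. of_real (c (m - k)) * a k) / of_real (c m)) \<longlonglongrightarrow> suminf a"
proof -
  define A where "A k m = (if k \<le> m then of_real (c (m - k) / c m) * a k else 0)" for k m
  have "(\<lambda>m. of_real (c (m - k) / c m) * a k) \<longlonglongrightarrow> a k" for k
    using tendsto_mult[OF tendsto_of_real[OF lim[of k]] tendsto_const[of "a k"]] by simp
  hence "(\<lambda>m. A k m) \<longlonglongrightarrow> a k" for k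
    by (rule Lim_transform_eventually)
       (use eventually_ge_at_top[of k] in \<open>eventually_elim, simp add: A_def\<close>)
  moreover have "norm (A k m) \<le> B k * norm (a k)" for k m
  proof (cases "k \<le> m")
    case True
    have "norm (A k m) = \<bar>c (m - k)\<bar> / \<bar>c m\<bar> * norm (a k)"
      using True by (simp add: A_def norm_mult norm_divide)
    also have "\<dots> \<le> B k * norm (a k)"
      using bound[OF True] nz[of m] by (intro mult_right_mono) (simp_all add: divide_le_eq)
    finally show ?thesis .
  next
    case False
    have "0 \<le> B k * \<bar>c k\<bar>"
      using bound[of k k] by (meson abs_ge_zero order_trans order_refl)
    hence "0 \<le> B k"
      using nz[of k] by (simp add: zero_le_mult_iff)
    with False show ?thesis by (simp add: A_def)
  qed
  hence "eventually (\<lambda>(k, m). norm (A k m) \<le> B k * norm (a k)) (at_top \<times>\<^sub>F sequentially)"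
    by (simp add: always_eventually)
  ultimately have "(\<lambda>m. \<Sum>k. A k m) \<longlonglongrightarrow> suminf a"
    using tannerys_theorem[OF _ _ summable sequentially_bot] by blast
  moreover have "(\<Sum>k. A k m) = (\<Sum>k\<le>m. of_real (c (m - k)) * a k) / of_real (c m)" for m
  proof -
    have "(\<Sum>k. A k m) = (\<Sum>k\<le>m. A k m)"
      by (rule suminf_finite) (auto simp: A_def)
    thus ?thesis
      by (simp add: A_def sum_divide_distrib)
  qed
  ultimately show ?thesis
    by simp
qed

section \<open>The generating function\<close>

definition terms_fps :: "complex fps" where
  "terms_fps = Abs_fps (\<lambda>n. of_nat (num_terms n))"

lemma terms_fps_nth [simp]: "terms_fps $ n = of_nat (num_terms n)"
  by (simp add: terms_fps_def)

lemma terms_fps_quadratic: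
  "(1 - fps_X) * terms_fps = fps_X + (1 - fps_X) * fps_X * (terms_fps + terms_fps ^ 2)"
proof -
  define A :: "complex fps" where "A = Abs_fps (\<lambda>n. if n = 0 then 0 else 1)"
  have square_nth: "(terms_fps * terms_fps) $ n = (\<Sum>i\<le>n. of_nat (num_terms i * num_terms (n - i)))" for n
    by (simp add: fps_mult_nth atLeast0AtMost)
  have "terms_fps = A + fps_X * terms_fps + fps_X * (terms_fps * terms_fps)"
  proof (rule fps_ext)
    fix n
    show "terms_fps $ n = (A + fps_X * terms_fps + fps_X * (terms_fps * terms_fps)) $ n"
      by (cases n) (simp_all add: square_nth A_def num_terms_0 num_terms_Suc)
  qed
  hence "(1 - fps_X) * terms_fps = (1 - fps_X) * (A + fps_X * terms_fps + fps_X * terms_fps ^ 2)"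
    by (simp add: power2_eq_square)
  also have "(1 - fps_X) * A = fps_X"
    by (rule fps_ext) (auto simp: A_def algebra_simps)
  hence "(1 - fps_X) * (A + fps_X * terms_fps + fps_X * terms_fps ^ 2)
      = fps_X + (1 - fps_X) * fps_X * (terms_fps + terms_fps ^ 2)"
    by (simp add: algebra_simps)
  finally show ?thesis .
qed

lemma terms_fps_discriminant:
  "(1 - fps_X - 2 * fps_X * terms_fps) ^ 2 * (1 - fps_X) = 1 - 3 * fps_X - fps_X ^ 2 - fps_X ^ 3"
  using terms_fps_quadratic by algebra

lemma fps_eq_if_square_eq:
  fixes F G :: "'a :: {idom, ring_char_0} fps"
  assumes "F ^ 2 = G ^ 2" "F $ 0 = G $ 0" "F $ 0 \<noteq> 0"
  shows "F = G"
proof -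
  have "(F + G) $ 0 \<noteq> 0"
    using assms(2,3) by simp
  hence "F + G \<noteq> 0"
    by (metis fps_zero_nth)
  moreover have "(F - G) * (F + G) = 0"
    using assms(1) by (simp add: algebra_simps power2_eq_square)
  ultimately show ?thesis
    by simp
qed

section \<open>The singular factorization\<close>

definition cofactor :: "complex \<Rightarrow> complex" where
  "cofactor z = 1 + of_real (rho * (1 + rho)) * z + of_real rho * z ^ 2"

lemma cofactor_factorization:
  "(1 - z / of_real rho) * cofactor z = 1 - 3 * z - z ^ 2 - z ^ 3"
proof -
  define r :: complex where "r = of_real rho"
  have "r \<noteq> 0"
    using rho_pos by (simp add: r_def)
  have "r ^ 3 + r ^ 2 + 3 * r = of_real (rho ^ 3 + rho ^ 2 + 3 * rho)"
    by (simp add: r_def)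
  hence root: "r ^ 3 + r ^ 2 + 3 * r = 1"
    by (simp add: rho_root)
  have "r * ((1 - z / r) * (1 + r * (1 + r) * z + r * z ^ 2)) = r * (1 - 3 * z - z ^ 2 - z ^ 3)"
    using \<open>r \<noteq> 0\<close> by (simp add: field_simps) (use root in algebra)
  thus ?thesis
    using \<open>r \<noteq> 0\<close> by (simp add: cofactor_def r_def)
qed

lemma Re_cofactor_pos:
  assumes "norm z < 2/5"
  shows "0 < Re (cofactor z)"
proof -
  have "rho * (1 + rho) \<le> 3/10 * (1 + 3/10)"
    using rho_pos rho_lt by (intro mult_mono) auto
  hence "norm (of_real (rho * (1 + rho)) * z) \<le> 3/10 * (1 + 3/10) * (2/5)"
    unfolding norm_mult norm_of_real using rho_pos assms by (intro mult_mono) auto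
  moreover have "norm z ^ 2 \<le> (2/5) ^ 2"
    using assms by (intro power_mono) auto
  hence "norm (of_real rho * z ^ 2) \<le> 3/10 * (2/5) ^ 2"
    unfolding norm_mult norm_of_real norm_power using rho_pos rho_lt by (intro mult_mono) auto
  moreover have Re_ge: "- norm w \<le> Re w" for w
    using abs_Re_le_cmod[of w] by linarith
  ultimately show ?thesis
    unfolding cofactor_def
    using Re_ge[of "of_real (rho * (1 + rho)) * z"] Re_ge[of "of_real rho * z ^ 2"]
    by (simp add: power2_eq_square)
qed

text \<open>The factor \<open>G\<close> of \<open>Y = \<surd>(1 - z/\<rho>) G(z)\<close>.\<close>

definition regular_factor :: "complex \<Rightarrow> complex" where
  "regular_factor z = csqrt (cofactor z) / csqrt (1 - z)"

lemma Re_one_minus_pos: "norm z < 1 \<Longrightarrow> 0 < Re (1 - z)"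
  using abs_Re_le_cmod[of z] by simp

lemma regular_factor_holomorphic: "regular_factor holomorphic_on ball 0 (2/5)"
  unfolding regular_factor_def
proof (intro holomorphic_intros)
  show "cofactor holomorphic_on ball 0 (2/5)"
    unfolding cofactor_def by (intro holomorphic_intros)
  fix z :: complex assume "z \<in> ball 0 (2/5)"
  hence "0 < Re (cofactor z)" "0 < Re (1 - z)"
    using Re_cofactor_pos[of z] Re_one_minus_pos[of z] by auto
  thus "cofactor z \<notin> \<real>\<^sub>\<le>\<^sub>0" "1 - z \<notin> \<real>\<^sub>\<le>\<^sub>0" "csqrt (1 - z) \<noteq> 0"
    by (auto simp: complex_nonpos_Reals_iff)
qed

lemma regular_factor_square:
  assumes "norm z < 2/5"
  shows "regular_factor z ^ 2 * (1 - z) = cofactor z"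
proof -
  have "z \<noteq> 1"
    using assms by auto
  thus ?thesis
    by (simp add: regular_factor_def power_divide del: csqrt_eq_0)
qed

lemma regular_factor_rho_nonzero: "regular_factor (of_real rho) \<noteq> 0"
proof -
  have "norm (of_real rho :: complex) < 2/5"
    using rho_pos rho_lt by simp
  hence "cofactor (of_real rho) \<noteq> 0"
    using Re_cofactor_pos by fastforce
  moreover have "1 - (of_real rho :: complex) \<noteq> 0"
    using rho_lt by (auto simp: complex_eq_iff)
  ultimately show ?thesis
    by (simp add: regular_factor_def)
qed

definition regular_fps :: "complex fps" where
  "regular_fps = fps_expansion regular_factor 0"

lemma has_fps_expansion_regular_factor: "regular_factor has_fps_expansion regular_fps"
  unfolding regular_fps_def
  by (rule has_fps_expansion_fps_expansion[OF _ _ regular_factor_holomorphic]) auto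

definition sqrt_fps :: "complex fps" where
  "sqrt_fps = fps_binomial (1/2) oo (fps_const (- 1 / of_real rho) * fps_X)"

lemma sqrt_fps_square: "sqrt_fps ^ 2 = 1 - fps_const (1 / of_real rho) * fps_X"
proof -
  define c :: complex where "c = - 1 / of_real rho"
  have "sqrt_fps ^ 2 = (fps_binomial (1/2) * fps_binomial (1/2)) oo (fps_const c * fps_X)"
    unfolding sqrt_fps_def power2_eq_square c_def by (simp add: fps_compose_mult_distrib)
  also have "fps_binomial (1/2) * fps_binomial (1/2) = (1 + fps_X :: complex fps)"
    by (simp flip: fps_binomial_add_mult add: fps_binomial_1)
  also have "(1 + fps_X) oo (fps_const c * fps_X) = 1 + fps_const c * fps_X"
    by (simp add: fps_compose_add_distrib)
  finally show ?thesis
    by (simp add: c_def flip: fps_const_neg)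
qed

lemma sqrt_fps_nth: "sqrt_fps $ j = of_real (sqrt_coeff j) / of_real rho ^ j"
proof -
  have "sqrt_fps $ j = ((1/2) gchoose j) * (- 1 / of_real rho) ^ j"
    by (simp add: sqrt_fps_def fps_binomial_def)
  also have "((1/2 :: complex) gchoose j) = (-1) ^ j * of_real (pochhammer (-1/2) j) / fact j"
    by (simp add: gbinomial_pochhammer flip: pochhammer_of_real)
  finally show ?thesis
    by (simp add: sqrt_coeff_def power_minus' power_divide field_simps)
qed

lemma regular_fps_nth_0: "regular_fps $ 0 = 1"
  by (simp add: regular_fps_def fps_expansion_def regular_factor_def cofactor_def)

lemma regular_fps_square: "regular_fps ^ 2 * (1 - fps_X) * (1 - fps_const (1 / of_real rho) * fps_X)
    = 1 - 3 * fps_X - fps_X ^ 2 - fps_X ^ 3"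
proof -
  have expansion: "(\<lambda>z. regular_factor z ^ 2 * (1 - z) * (1 - 1 / of_real rho * z)) has_fps_expansion
      regular_fps ^ 2 * (1 - fps_X) * (1 - fps_const (1 / of_real rho) * fps_X)"
    by (intro fps_expansion_intros has_fps_expansion_regular_factor)
  have "eventually (\<lambda>z. regular_factor z ^ 2 * (1 - z) * (1 - 1 / of_real rho * z)
      = 1 - 3 * z - z ^ 2 - z ^ 3) (nhds 0)"
  proof -
    have "eventually (\<lambda>z. z \<in> ball (0 :: complex) (2/5)) (nhds 0)"
      by (intro eventually_nhds_in_open) auto
    thus ?thesis
      by eventually_elim
         (use regular_factor_square cofactor_factorization in \<open>simp add: mult.commute[of _ "1 - _"]\<close>)
  qed
  from has_fps_expansion_cong[OF this refl] expansion
  have "(\<lambda>z. 1 - 3 * z - z ^ 2 - z ^ 3) has_fps_expansion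
      regular_fps ^ 2 * (1 - fps_X) * (1 - fps_const (1 / of_real rho) * fps_X)"
    by blast
  moreover have "(\<lambda>z :: complex. 1 - 3 * z - z ^ 2 - z ^ 3) has_fps_expansion 1 - 3 * fps_X - fps_X ^ 2 - fps_X ^ 3"
    by (intro fps_expansion_intros)
  ultimately show ?thesis
    by (rule fps_expansion_unique_complex)
qed

lemma terms_fps_factorization: "1 - fps_X - 2 * fps_X * terms_fps = sqrt_fps * regular_fps"
proof (rule fps_eq_if_square_eq)
  have "(1 - fps_X - 2 * fps_X * terms_fps) ^ 2 * (1 - fps_X) = (sqrt_fps * regular_fps) ^ 2 * (1 - fps_X)"
    unfolding terms_fps_discriminant power_mult_distrib sqrt_fps_square regular_fps_square[symmetric]
    by (simp add: algebra_simps)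
  moreover have "(1 - fps_X :: complex fps) \<noteq> 0"
    by (metis fps_X_nth fps_one_nth fps_sub_nth diff_zero one_neq_zero fps_zero_nth)
  ultimately show "(1 - fps_X - 2 * fps_X * terms_fps) ^ 2 = (sqrt_fps * regular_fps) ^ 2"
    by simp
qed (simp_all add: regular_fps_nth_0 sqrt_fps_nth)

section \<open>Asymptotics of the coefficients\<close>

lemma regular_fps_nth: "regular_fps $ k = (deriv ^^ k) regular_factor 0 / fact k"
  by (simp add: regular_fps_def fps_expansion_def)

lemma regular_fps_scaled_sums: "(\<lambda>k. regular_fps $ k * of_real rho ^ k) sums regular_factor (of_real rho)"
proof -
  have "of_real rho \<in> ball (0 :: complex) (2/5)"
    using rho_pos rho_lt by simp
  from holomorphic_power_series[OF regular_factor_holomorphic this] show ?thesis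
    by (simp add: regular_fps_nth)
qed

lemma regular_fps_scaled_bound:
  "\<exists>M. \<forall>k. norm (regular_fps $ k * of_real rho ^ k) \<le> M * (20/7 * rho) ^ k"
proof -
  have "of_real (7/20) \<in> ball (0 :: complex) (2/5)"
    by simp
  from holomorphic_power_series[OF regular_factor_holomorphic this]
  have "summable (\<lambda>k. regular_fps $ k * of_real (7/20) ^ k)"
    by (simp add: regular_fps_nth sums_iff)
  hence "Bseq (\<lambda>k. regular_fps $ k * of_real (7/20) ^ k)"
    by (intro convergent_imp_Bseq summable_LIMSEQ_zero[THEN convergentI])
  then obtain M where M: "\<And>k. norm (regular_fps $ k * of_real (7/20) ^ k) \<le> M"
    unfolding Bseq_def by blast
  have "norm (regular_fps $ k * of_real rho ^ k) \<le> M * (20/7 * rho) ^ k" for k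
  proof -
    have "norm (regular_fps $ k * of_real rho ^ k)
        = norm (regular_fps $ k * of_real (7/20) ^ k) * (20/7 * rho) ^ k"
      using rho_pos by (simp add: norm_mult norm_power power_mult_distrib[symmetric])
    also have "\<dots> \<le> M * (20/7 * rho) ^ k"
      using M[of k] rho_pos by (intro mult_right_mono) auto
    finally show ?thesis .
  qed
  thus ?thesis by blast
qed

lemma product_coeff_scaled:
  "(sqrt_fps * regular_fps) $ n * of_real rho ^ n
     = (\<Sum>k\<le>n. of_real (sqrt_coeff (n - k)) * (regular_fps $ k * of_real rho ^ k))"
proof -
  have "(sqrt_fps * regular_fps) $ n * of_real rho ^ n
      = (\<Sum>k\<le>n. regular_fps $ k * sqrt_fps $ (n - k) * of_real rho ^ n)"
    by (simp add: fps_mult_nth mult.commute[of sqrt_fps] sum_distrib_right atLeast0AtMost)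
  also have "\<dots> = (\<Sum>k\<le>n. of_real (sqrt_coeff (n - k)) * (regular_fps $ k * of_real rho ^ k))"
  proof (rule sum.cong)
    fix k assume "k \<in> {..n}"
    hence "(of_real rho ^ n :: complex) = of_real rho ^ (n - k) * of_real rho ^ k"
      by (simp flip: power_add)
    thus "regular_fps $ k * sqrt_fps $ (n - k) * of_real rho ^ n
        = of_real (sqrt_coeff (n - k)) * (regular_fps $ k * of_real rho ^ k)"
      using rho_pos by (simp add: sqrt_fps_nth)
  qed simp
  finally show ?thesis .
qed

lemma product_coeff_asymptotics:
  "(\<lambda>n. (sqrt_fps * regular_fps) $ n * of_real rho ^ n / of_real (sqrt_coeff n))
     \<longlonglongrightarrow> regular_factor (of_real rho)"
proof -
  define a where "a k = regular_fps $ k * of_real rho ^ k" for k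
  obtain M where M: "\<And>k. norm (a k) \<le> M * (20/7 * rho) ^ k"
    using regular_fps_scaled_bound unfolding a_def by blast
  have "summable (\<lambda>k. (real k + 1) ^ 2 * (20/7 * rho) ^ k)"
    using rho_pos rho_lt by (intro summable_square_times_geometric) auto
  hence "summable (\<lambda>k. 2 * M * ((real k + 1) ^ 2 * (20/7 * rho) ^ k))"
    by (rule summable_mult)
  hence "summable (\<lambda>k. 2 * (real k + 1) ^ 2 * norm (a k))"
  proof (rule summable_comparison_test')
    show "norm (2 * (real k + 1) ^ 2 * norm (a k)) \<le> 2 * M * ((real k + 1) ^ 2 * (20/7 * rho) ^ k)" for k
      using M[of k] by (simp add: mult_left_mono)
  qed
  from convolution_transfer[OF sqrt_coeff_nonzero sqrt_coeff_back_tendsto sqrt_coeff_ratio_bound this]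
  show ?thesis
    using regular_fps_scaled_sums by (simp add: a_def product_coeff_scaled sums_iff)
qed

lemma num_terms_ratio_tendsto: "(\<lambda>n. real (num_terms n) / num_terms (Suc n)) \<longlonglongrightarrow> rho"
proof -
  have "(\<lambda>n. (sqrt_fps * regular_fps) $ n / (sqrt_fps * regular_fps) $ Suc n) \<longlonglongrightarrow> of_real rho"
    using product_coeff_asymptotics regular_factor_rho_nonzero sqrt_coeff_ratio_tendsto
      sqrt_coeff_nonzero rho_pos
    by (intro ratio_tendsto_of_scaled_tendsto) auto
  from LIMSEQ_ignore_initial_segment[OF this, of 2]
  have "(\<lambda>n. (sqrt_fps * regular_fps) $ Suc (Suc n) / (sqrt_fps * regular_fps) $ Suc (Suc (Suc n)))
      \<longlonglongrightarrow> of_real rho"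
    by (simp add: numeral_2_eq_2)
  moreover have "(sqrt_fps * regular_fps) $ Suc (Suc n) = - 2 * of_nat (num_terms (Suc n))" for n
    using arg_cong[OF terms_fps_factorization, of "\<lambda>F. F $ Suc (Suc n)"]
    by (simp add: numeral_fps_const mult.assoc)
  ultimately have "(\<lambda>n. of_real (real (num_terms (Suc n)) / num_terms (Suc (Suc n))) :: complex)
      \<longlonglongrightarrow> of_real rho"
    by simp
  thus ?thesis
    unfolding tendsto_of_real_iff by (rule LIMSEQ_imp_Suc)
qed

theorem mainTheorem4:
  shows "(\<forall>h::nat. (\<lambda>n. prob_heads n h) \<longlonglongrightarrow> (1 - rho) * rho ^ h)
         \<and> exp_heads \<longlonglongrightarrow> rho / (1 - rho)"
proof -
  let ?T = "\<lambda>n. real (num_terms n)"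
  have ratio: "(\<lambda>n. ?T n / ?T (Suc n)) \<longlonglongrightarrow> rho"
    by (rule num_terms_ratio_tendsto)
  have pos: "eventually (\<lambda>n. 0 < ?T n) sequentially"
    using eventually_gt_at_top[of 0] by eventually_elim (simp add: num_terms_pos)
  hence nonzero: "eventually (\<lambda>n. ?T n \<noteq> 0) sequentially"
    by (auto elim: eventually_mono)
  have "(\<lambda>n. prob_heads n h) \<longlonglongrightarrow> (1 - rho) * rho ^ h" for h
  proof -
    have "(\<lambda>n. ?T (n - h) / ?T n - ?T (n - Suc h) / ?T n) \<longlonglongrightarrow> rho ^ h - rho ^ Suc h"
      by (intro tendsto_diff ratio_back_tendsto[OF ratio nonzero])
    moreover have "eventually (\<lambda>n. ?T (n - h) / ?T n - ?T (n - Suc h) / ?T n = prob_heads n h) sequentially"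
      using eventually_gt_at_top[of h] by eventually_elim (simp add: prob_heads_eq)
    ultimately show ?thesis
      by (simp add: Lim_transform_eventually algebra_simps)
  qed
  moreover have "exp_heads \<longlonglongrightarrow> rho / (1 - rho)"
    unfolding exp_heads_eq using mono_num_terms rho_lt
    by (intro ratio_tail_sum_tendsto[OF _ _ pos ratio]) (auto simp: mono_def)
  ultimately show ?thesis
    by blast
qed

end
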